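(* Let $f\colon X\to X$ be a cw-expansive homeomorphism of a compact metric space $X$. Then there are $\delta>0$ and a continuous function $\mathcal L\colon\mathcal C_\delta(X)\to\mathbb{R}$ such that: 1. $\mathcal L(A)\ge0$ for all $A\in\mathcal C_\delta(X)$, with equality if and only if $A$ is a singleton; 2. $\mathcal L(f(A))-2\mathcal L(A)+\mathcal L(f^{-1}(A))=\mathcal L(A)$ whenever $f(A),A,f^{-1}(A)\in\mathcal C_\delta(X)$.
   Context: A continuum is a nonempty compact connected set. $\mathcal C(X)$ is the space of subcontinua of $X$ with the Hausdorff distance, and $\mathcal C_\delta(X)=\{A\in\mathcal C(X):\operatorname{diam}A\le\delta\}$. A homeomorphism $f$ is cw-expansive if there is $\delta>0$ such that $f^n(A)\in\mathcal C_\delta(X)$ for all $n\in\mathbb{Z}$ implies $A\in\mathcal C_0(X)$, i.e. $A$ is a singleton. *)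

theory Defs
  imports "HOL-Analysis.Analysis"
begin

definition hausdist :: "'a::metric_space set \<Rightarrow> 'a set \<Rightarrow> real" where
  "hausdist A B = max (SUP a\<in>A. infdist a B) (SUP b\<in>B. infdist b A)"

definition continuum_in :: "'a::metric_space set \<Rightarrow> 'a set \<Rightarrow> bool" where
  "continuum_in X A \<longleftrightarrow> A \<subseteq> X \<and> A \<noteq> {} \<and> compact A \<and> connected A"

definition C_delta :: "'a::metric_space set \<Rightarrow> real \<Rightarrow> 'a set set" where
  "C_delta X d = {A. continuum_in X A \<and> diameter A \<le> d}"

text \<open>Integer iterates of f, with g the inverse of f.\<close>
definition zpow :: "('a \<Rightarrow> 'a) \<Rightarrow> ('a \<Rightarrow> 'a) \<Rightarrow> int \<Rightarrow> 'a \<Rightarrow> 'a" where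
  "zpow f g n = (if n \<ge> 0 then f ^^ nat n else g ^^ nat (- n))"

definition cw_expansive :: "'a::metric_space set \<Rightarrow> ('a \<Rightarrow> 'a) \<Rightarrow> ('a \<Rightarrow> 'a) \<Rightarrow> bool" where
  "cw_expansive X f g \<longleftrightarrow> (\<exists>d>0. \<forall>A. continuum_in X A \<longrightarrow>
      (\<forall>n::int. zpow f g n ` A \<in> C_delta X d) \<longrightarrow> A \<in> C_delta X 0)"

end

theory Submission
  imports Defs
begin

(*
  Let \<psi>(C) = max 0 (diam C - \<delta>) measure how far a continuum exceeds the expansivity
  constant \<delta>, and put L(A) = \<Sum>n\<ge>0 \<lambda>^n (\<psi>(f^n A) + \<psi>(f^-n A)) with \<lambda> = (3 - sqrt 5)/2,
  so that \<lambda> + 1/\<lambda> = 3. If A, f(A) and f^-1(A) lie in C_\<delta>, the terms with n = 0 vanish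
  and shifting the two series gives L(f A) + L(f^-1 A) = (\<lambda> + 1/\<lambda>) L(A) = 3 L(A).
  L(A) = 0 means that the whole orbit of A stays in C_\<delta>, which by cw-expansivity forces A to
  be a point. Continuity for the Hausdorff distance comes from the uniform continuity of each
  iterate together with the uniform convergence of the geometric series.
*)

section \<open>Continuity with respect to the Hausdorff distance\<close>

definition haus_continuous_at :: "'a::metric_space set set \<Rightarrow> ('a set \<Rightarrow> real) \<Rightarrow> 'a set \<Rightarrow> bool" where
  "haus_continuous_at S F A \<longleftrightarrow>
     (\<forall>e>0. \<exists>r>0. \<forall>B\<in>S. hausdist A B < r \<longrightarrow> \<bar>F B - F A\<bar> < e)"

lemma haus_continuous_atI:
  assumes "\<And>e. e > 0 \<Longrightarrow> \<exists>r>0. \<forall>B\<in>S. hausdist A B < r \<longrightarrow> \<bar>F B - F A\<bar> < e"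
  shows "haus_continuous_at S F A"
  using assms unfolding haus_continuous_at_def by blast

lemma haus_continuous_atE:
  assumes "haus_continuous_at S F A" "e > 0"
  obtains r where "r > 0" "\<And>B. B \<in> S \<Longrightarrow> hausdist A B < r \<Longrightarrow> \<bar>F B - F A\<bar> < e"
  using assms unfolding haus_continuous_at_def by blast

lemma haus_continuous_at_subset:
  "haus_continuous_at S F A \<Longrightarrow> T \<subseteq> S \<Longrightarrow> haus_continuous_at T F A"
  unfolding haus_continuous_at_def by blast

lemma haus_continuous_at_const: "haus_continuous_at S (\<lambda>B. c) A"
  by (rule haus_continuous_atI) (intro exI[of _ 1], simp)

lemma haus_continuous_at_add:
  assumes "haus_continuous_at S F A" "haus_continuous_at S G A"
  shows "haus_continuous_at S (\<lambda>B. F B + G B) A"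
proof (rule haus_continuous_atI)
  fix e :: real
  assume "e > 0"
  then have "e / 2 > 0" by simp
  obtain r1 where "r1 > 0" and r1: "\<And>B. B \<in> S \<Longrightarrow> hausdist A B < r1 \<Longrightarrow> \<bar>F B - F A\<bar> < e / 2"
    using haus_continuous_atE[OF assms(1) \<open>e / 2 > 0\<close>] by blast
  obtain r2 where "r2 > 0" and r2: "\<And>B. B \<in> S \<Longrightarrow> hausdist A B < r2 \<Longrightarrow> \<bar>G B - G A\<bar> < e / 2"
    using haus_continuous_atE[OF assms(2) \<open>e / 2 > 0\<close>] by blast
  have "\<bar>F B + G B - (F A + G A)\<bar> < e" if "B \<in> S" "hausdist A B < min r1 r2" for B
    using r1[of B] r2[of B] that by arith
  then show "\<exists>r>0. \<forall>B\<in>S. hausdist A B < r \<longrightarrow> \<bar>F B + G B - (F A + G A)\<bar> < e"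
    using \<open>r1 > 0\<close> \<open>r2 > 0\<close> by (intro exI[of _ "min r1 r2"]) auto
qed

lemma haus_continuous_at_cmult:
  assumes "haus_continuous_at S F A"
  shows "haus_continuous_at S (\<lambda>B. c * F B) A"
proof (rule haus_continuous_atI)
  fix e :: real
  assume "e > 0"
  then have "e / (\<bar>c\<bar> + 1) > 0" by (simp add: add_nonneg_pos)
  then obtain r where "r > 0" and r: "\<And>B. B \<in> S \<Longrightarrow> hausdist A B < r \<Longrightarrow> \<bar>F B - F A\<bar> < e / (\<bar>c\<bar> + 1)"
    using haus_continuous_atE[OF assms] by blast
  have "\<bar>c * F B - c * F A\<bar> < e" if "B \<in> S" "hausdist A B < r" for B
  proof -
    have "\<bar>c * F B - c * F A\<bar> = \<bar>c\<bar> * \<bar>F B - F A\<bar>"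
      by (simp add: abs_mult right_diff_distrib[symmetric])
    also have "\<dots> \<le> (\<bar>c\<bar> + 1) * \<bar>F B - F A\<bar>" by (simp add: mult_right_mono)
    also have "\<dots> < e"
      using r[OF that] by (simp add: pos_less_divide_eq mult.commute add_nonneg_pos)
    finally show ?thesis .
  qed
  then show "\<exists>r>0. \<forall>B\<in>S. hausdist A B < r \<longrightarrow> \<bar>c * F B - c * F A\<bar> < e"
    using \<open>r > 0\<close> by (intro exI[of _ r]) auto
qed

lemma haus_continuous_at_sum:
  assumes "finite I" "\<And>i. i \<in> I \<Longrightarrow> haus_continuous_at S (F i) A"
  shows "haus_continuous_at S (\<lambda>B. \<Sum>i\<in>I. F i B) A"
  using assms
  by (induction I rule: finite_induct) (simp_all add: haus_continuous_at_const haus_continuous_at_add)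

lemma haus_continuous_at_comp_nonexpansive:
  assumes "haus_continuous_at S F A" "\<And>x y. \<bar>\<phi> x - \<phi> y\<bar> \<le> \<bar>x - y\<bar>"
  shows "haus_continuous_at S (\<lambda>B. \<phi> (F B)) A"
proof (rule haus_continuous_atI)
  fix e :: real
  assume "e > 0"
  then obtain r where "r > 0" and r: "\<And>B. B \<in> S \<Longrightarrow> hausdist A B < r \<Longrightarrow> \<bar>F B - F A\<bar> < e"
    using haus_continuous_atE[OF assms(1)] by blast
  have "\<bar>\<phi> (F B) - \<phi> (F A)\<bar> < e" if "B \<in> S" "hausdist A B < r" for B
    using assms(2)[of "F B" "F A"] r[OF that] by linarith
  then show "\<exists>r>0. \<forall>B\<in>S. hausdist A B < r \<longrightarrow> \<bar>\<phi> (F B) - \<phi> (F A)\<bar> < e"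
    using \<open>r > 0\<close> by (intro exI[of _ r]) auto
qed

lemma haus_continuous_at_uniform_approx:
  assumes "A \<in> S"
    and approx: "\<And>e. e > 0 \<Longrightarrow> \<exists>G. haus_continuous_at S G A \<and> (\<forall>B\<in>S. \<bar>F B - G B\<bar> \<le> e)"
  shows "haus_continuous_at S F A"
proof (rule haus_continuous_atI)
  fix e :: real
  assume "e > 0"
  then obtain G where G: "haus_continuous_at S G A" and close: "\<And>B. B \<in> S \<Longrightarrow> \<bar>F B - G B\<bar> \<le> e / 4"
    using approx[of "e / 4"] by auto
  have "e / 2 > 0" using \<open>e > 0\<close> by simp
  then obtain r where "r > 0" and r: "\<And>B. B \<in> S \<Longrightarrow> hausdist A B < r \<Longrightarrow> \<bar>G B - G A\<bar> < e / 2"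
    using haus_continuous_atE[OF G] by blast
  have "\<bar>F B - F A\<bar> < e" if "B \<in> S" "hausdist A B < r" for B
    using close[OF \<open>B \<in> S\<close>] close[OF \<open>A \<in> S\<close>] r[OF that] by arith
  then show "\<exists>r>0. \<forall>B\<in>S. hausdist A B < r \<longrightarrow> \<bar>F B - F A\<bar> < e"
    using \<open>r > 0\<close> by (intro exI[of _ r]) auto
qed

lemma summable_geometric_weighted:
  fixes a :: "nat \<Rightarrow> real"
  assumes "0 \<le> l" "l < 1" "\<And>n. \<bar>a n\<bar> \<le> M"
  shows "summable (\<lambda>n. l ^ n * a n)"
proof (rule summable_comparison_test'[of "\<lambda>n. M * l ^ n"])
  show "summable (\<lambda>n. M * l ^ n)"
    using assms by (intro summable_mult summable_geometric) auto
  show "norm (l ^ n * a n) \<le> M * l ^ n" for n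
  proof -
    have "\<bar>a n\<bar> * l ^ n \<le> M * l ^ n" by (rule mult_right_mono) (use assms in auto)
    then show ?thesis using assms by (simp add: abs_mult mult.commute)
  qed
qed

lemma geometric_weighted_tail_le:
  fixes a :: "nat \<Rightarrow> real"
  assumes "0 \<le> l" "l < 1" "\<And>n. \<bar>a n\<bar> \<le> M"
  shows "\<bar>(\<Sum>n. l ^ n * a n) - (\<Sum>n<N. l ^ n * a n)\<bar> \<le> M * l ^ N / (1 - l)"
proof -
  have summable: "summable (\<lambda>n. l ^ n * a n)" by (rule summable_geometric_weighted[OF assms])
  have "(\<Sum>n. l ^ n * a n) - (\<Sum>n<N. l ^ n * a n) = (\<Sum>n. l ^ (n + N) * a (n + N))"
    using suminf_minus_initial_segment[OF summable, of N] by simp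
  also have "\<bar>\<dots>\<bar> \<le> (\<Sum>n. M * l ^ N * l ^ n)"
  proof (rule norm_suminf_le[where 'a = real, unfolded real_norm_def])
    show "\<bar>l ^ (n + N) * a (n + N)\<bar> \<le> M * l ^ N * l ^ n" for n
    proof -
      have "\<bar>a (n + N)\<bar> * l ^ (n + N) \<le> M * l ^ (n + N)"
        by (rule mult_right_mono) (use assms in auto)
      then show ?thesis using assms by (simp add: abs_mult power_add mult_ac)
    qed
    show "summable (\<lambda>n. M * l ^ N * l ^ n)"
      using assms by (intro summable_mult summable_geometric) auto
  qed
  also have "\<dots> = M * l ^ N / (1 - l)"
    using assms by (simp add: suminf_mult suminf_geometric)
  finally show ?thesis .
qed

lemma haus_continuous_at_geometric_series:
  fixes h :: "nat \<Rightarrow> 'a::metric_space set \<Rightarrow> real"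
  assumes l: "0 \<le> l" "l < 1" and "A \<in> S"
    and bound: "\<And>n B. B \<in> S \<Longrightarrow> \<bar>h n B\<bar> \<le> M"
    and cont: "\<And>n. haus_continuous_at S (h n) A"
  shows "haus_continuous_at S (\<lambda>B. \<Sum>n. l ^ n * h n B) A"
proof (rule haus_continuous_at_uniform_approx[OF \<open>A \<in> S\<close>])
  fix e :: real
  assume "e > 0"
  have "M \<ge> 0" using bound[OF \<open>A \<in> S\<close>, of 0] by linarith
  obtain N where N: "l ^ N < e * (1 - l) / (M + 1)"
    using real_arch_pow_inv[of "e * (1 - l) / (M + 1)" l] \<open>e > 0\<close> \<open>M \<ge> 0\<close> l by auto
  have "M * l ^ N / (1 - l) \<le> e"
  proof -
    have "M * l ^ N \<le> (M + 1) * l ^ N" using l by (simp add: distrib_right)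
    also have "\<dots> \<le> e * (1 - l)" using N \<open>M \<ge> 0\<close> by (simp add: pos_less_divide_eq mult.commute)
    finally show ?thesis using l by (simp add: pos_divide_le_eq)
  qed
  moreover have "\<bar>(\<Sum>n. l ^ n * h n B) - (\<Sum>n<N. l ^ n * h n B)\<bar> \<le> M * l ^ N / (1 - l)"
    if "B \<in> S" for B
    by (rule geometric_weighted_tail_le[OF l]) (rule bound[OF that])
  ultimately have "\<bar>(\<Sum>n. l ^ n * h n B) - (\<Sum>n<N. l ^ n * h n B)\<bar> \<le> e" if "B \<in> S" for B
    using that by (meson order_trans)
  moreover have "haus_continuous_at S (\<lambda>B. \<Sum>n<N. l ^ n * h n B) A"
    by (intro haus_continuous_at_sum haus_continuous_at_cmult cont) simp
  ultimately show "\<exists>G. haus_continuous_at S G A \<and> (\<forall>B\<in>S. \<bar>(\<Sum>n. l ^ n * h n B) - G B\<bar> \<le> e)"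
    by blast
qed

lemma hausdist_commute: "hausdist A B = hausdist B A"
  unfolding hausdist_def by (simp add: max.commute)

lemma hausdist_less_imp_near:
  fixes A B :: "'a::metric_space set"
  assumes "compact A" "B \<noteq> {}" "hausdist A B < r" "a \<in> A"
  shows "\<exists>b\<in>B. dist a b < r"
proof -
  have "bdd_above ((\<lambda>x. infdist x B) ` A)"
    by (intro bounded_imp_bdd_above compact_imp_bounded compact_continuous_image
        continuous_on_infdist continuous_on_id \<open>compact A\<close>)
  then have "infdist a B \<le> hausdist A B"
    unfolding hausdist_def using \<open>a \<in> A\<close> by (meson cSUP_upper max.coboundedI1 order_trans)
  then have "(INF b\<in>B. dist a b) < r"
    using assms by (simp add: infdist_notempty)
  moreover have "bdd_below (dist a ` B)" by (rule bdd_belowI[of _ 0]) auto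
  ultimately show ?thesis using \<open>B \<noteq> {}\<close> by (simp add: cINF_less_iff)
qed

lemma diameter_le_of_near:
  fixes S T :: "'a::metric_space set"
  assumes "bounded T" "\<forall>x\<in>S. \<exists>y\<in>T. dist x y < e" "0 \<le> e"
  shows "diameter S \<le> diameter T + 2 * e"
proof (cases "S = {}")
  case True
  then show ?thesis using \<open>bounded T\<close> \<open>0 \<le> e\<close> by (simp add: diameter_ge_0)
next
  case False
  have "dist x y \<le> diameter T + 2 * e" if "x \<in> S" "y \<in> S" for x y
  proof -
    obtain x' where "x' \<in> T" "dist x x' < e" using assms(2) \<open>x \<in> S\<close> by blast
    obtain y' where "y' \<in> T" "dist y y' < e" using assms(2) \<open>y \<in> S\<close> by blast
    have "dist x' y' \<le> diameter T"
      using diameter_bounded_bound[OF \<open>bounded T\<close> \<open>x' \<in> T\<close> \<open>y' \<in> T\<close>] .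
    then show ?thesis
      using dist_triangle[of x y x'] dist_triangle[of x' y y'] dist_commute[of y' y]
        \<open>dist x x' < e\<close> \<open>dist y y' < e\<close> by linarith
  qed
  then have "(SUP (x, y)\<in>S \<times> S. dist x y) \<le> diameter T + 2 * e"
    using False by (intro cSUP_least) auto
  then show ?thesis by (simp add: diameter_def False)
qed

lemma haus_continuous_at_diameter_image:
  fixes X :: "'a::metric_space set"
  defines "K \<equiv> {C. C \<subseteq> X \<and> C \<noteq> {} \<and> compact C}"
  assumes "compact X" "continuous_on X h" "A \<in> K"
  shows "haus_continuous_at K (\<lambda>C. diameter (h ` C)) A"
  unfolding haus_continuous_at_def
proof (intro allI impI)
  fix e :: real
  assume "e > 0"
  have "e / 3 > 0" using \<open>e > 0\<close> by simp
  then obtain r where "r > 0"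
    and r: "\<forall>x\<in>X. \<forall>x'\<in>X. dist x' x < r \<longrightarrow> dist (h x') (h x) < e / 3"
    using compact_uniformly_continuous[OF \<open>continuous_on X h\<close> \<open>compact X\<close>]
    unfolding uniformly_continuous_on_def by blast
  have near: "\<forall>x\<in>h ` C. \<exists>y\<in>h ` D. dist x y < e / 3"
    if CD: "C \<in> K" "D \<in> K" "hausdist C D < r" for C D
  proof
    fix x
    assume "x \<in> h ` C"
    then obtain a where "a \<in> C" "x = h a" by blast
    moreover obtain b where "b \<in> D" "dist a b < r"
      using hausdist_less_imp_near[of C D r a] CD \<open>a \<in> C\<close> unfolding K_def by blast
    moreover have "C \<subseteq> X" "D \<subseteq> X" using CD unfolding K_def by auto
    ultimately show "\<exists>y\<in>h ` D. dist x y < e / 3"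
      using r[rule_format, of b a] by (intro bexI[of _ "h b"]) auto
  qed
  have bounded: "bounded (h ` C)" if "C \<in> K" for C
  proof -
    have "continuous_on C h" using that \<open>continuous_on X h\<close> unfolding K_def
      by (auto intro: continuous_on_subset)
    then show ?thesis
      using that unfolding K_def by (auto intro: compact_imp_bounded compact_continuous_image)
  qed
  have "\<bar>diameter (h ` B) - diameter (h ` A)\<bar> < e" if B: "B \<in> K" "hausdist A B < r" for B
  proof -
    have "hausdist B A < r" using B(2) by (simp only: hausdist_commute)
    have "diameter (h ` A) \<le> diameter (h ` B) + 2 * (e / 3)"
      by (rule diameter_le_of_near[OF bounded[OF B(1)] near[OF \<open>A \<in> K\<close> B]]) (use \<open>e > 0\<close> in simp)
    moreover have "diameter (h ` B) \<le> diameter (h ` A) + 2 * (e / 3)"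
      by (rule diameter_le_of_near[OF bounded[OF \<open>A \<in> K\<close>] near[OF B(1) \<open>A \<in> K\<close> \<open>hausdist B A < r\<close>]])
        (use \<open>e > 0\<close> in simp)
    ultimately show ?thesis using \<open>e > 0\<close> by arith
  qed
  then show "\<exists>r>0. \<forall>B\<in>K. hausdist A B < r \<longrightarrow> \<bar>diameter (h ` B) - diameter (h ` A)\<bar> < e"
    using \<open>r > 0\<close> by (intro exI[of _ r]) simp
qed

section \<open>Orbits of continua\<close>

lemma funpow_image_subset: "h ` X \<subseteq> X \<Longrightarrow> (h ^^ n) ` X \<subseteq> X"
  by (induction n) (auto simp: image_subset_iff)

lemma continuous_on_funpow:
  assumes "continuous_on X h" "h ` X \<subseteq> X"
  shows "continuous_on X (h ^^ n)"
proof (induction n)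
  case 0
  show ?case by (simp add: continuous_on_id)
next
  case (Suc n)
  have "continuous_on X (h \<circ> h ^^ n)"
    by (rule continuous_on_compose[OF Suc continuous_on_subset[OF assms(1) funpow_image_subset[OF assms(2)]]])
  then show ?case by simp
qed

lemma continuum_in_image:
  assumes "continuous_on X h" "h ` X \<subseteq> X" "continuum_in X A"
  shows "continuum_in X (h ` A)"
proof -
  have A: "A \<subseteq> X" "A \<noteq> {}" "compact A" "connected A"
    using assms(3) by (auto simp: continuum_in_def)
  have "continuous_on A h" using assms(1) \<open>A \<subseteq> X\<close> by (rule continuous_on_subset)
  then show ?thesis
    using A assms(2) unfolding continuum_in_def
    by (intro conjI compact_continuous_image connected_continuous_image) auto
qed

lemma C_delta_0_imp_singleton:
  assumes "A \<in> C_delta X 0"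
  shows "\<exists>x. A = {x}"
proof -
  have "A \<noteq> {}" "compact A" "diameter A \<le> 0"
    using assms by (auto simp: C_delta_def continuum_in_def)
  then obtain x where "x \<in> A" by blast
  have "y = x" if "y \<in> A" for y
    using diameter_bounded_bound[OF compact_imp_bounded[OF \<open>compact A\<close>] \<open>x \<in> A\<close> that]
      \<open>diameter A \<le> 0\<close> by (metis dist_le_zero_iff order.trans)
  then show ?thesis using \<open>x \<in> A\<close> by blast
qed

lemma zpow_image_in_C_delta:
  assumes "\<And>n. (f ^^ n) ` A \<in> C_delta X d" "\<And>n. (g ^^ n) ` A \<in> C_delta X d"
  shows "zpow f g n ` A \<in> C_delta X d"
  using assms by (simp add: zpow_def)

definition diam_excess :: "real \<Rightarrow> 'a::metric_space set \<Rightarrow> real" where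
  "diam_excess d C = max 0 (diameter C - d)"

definition orbit_excess :: "real \<Rightarrow> real \<Rightarrow> ('a::metric_space \<Rightarrow> 'a) \<Rightarrow> 'a set \<Rightarrow> real" where
  "orbit_excess l d h A = (\<Sum>n. l ^ n * diam_excess d ((h ^^ n) ` A))"

lemma diam_excess_nonneg: "0 \<le> diam_excess d C"
  by (simp add: diam_excess_def)

lemma diam_excess_eq_0_iff: "diam_excess d C = 0 \<longleftrightarrow> diameter C \<le> d"
  by (auto simp: diam_excess_def max_def)

lemma diam_excess_le:
  assumes "bounded X" "C \<subseteq> X" "0 \<le> d"
  shows "diam_excess d C \<le> diameter X"
  using diameter_subset[OF assms(2,1)] diameter_ge_0[OF assms(1)] assms(3)
  by (simp add: diam_excess_def)

lemma summable_orbit_excess: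
  assumes "bounded X" "h ` X \<subseteq> X" "A \<subseteq> X" "0 \<le> d" "0 \<le> l" "l < 1"
  shows "summable (\<lambda>n. l ^ n * diam_excess d ((h ^^ n) ` A))"
proof (rule summable_geometric_weighted[OF assms(5,6)])
  fix n
  have "(h ^^ n) ` A \<subseteq> X" using funpow_image_subset[OF assms(2)] assms(3) by blast
  then show "\<bar>diam_excess d ((h ^^ n) ` A)\<bar> \<le> diameter X"
    using diam_excess_le[OF assms(1) _ assms(4)] by (simp add: abs_of_nonneg diam_excess_nonneg)
qed

lemma orbit_excess_nonneg:
  assumes "summable (\<lambda>n. l ^ n * diam_excess d ((h ^^ n) ` A))" "0 \<le> l"
  shows "0 \<le> orbit_excess l d h A"
  unfolding orbit_excess_def using assms by (intro suminf_nonneg) (simp_all add: diam_excess_nonneg)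

lemma orbit_excess_eq_0_iff:
  assumes "summable (\<lambda>n. l ^ n * diam_excess d ((h ^^ n) ` A))" "0 < l"
  shows "orbit_excess l d h A = 0 \<longleftrightarrow> (\<forall>n. diameter ((h ^^ n) ` A) \<le> d)"
  unfolding orbit_excess_def using assms
  by (simp add: suminf_eq_zero_iff diam_excess_nonneg diam_excess_eq_0_iff)

lemma orbit_excess_image:
  assumes "summable (\<lambda>n. l ^ n * diam_excess d ((h ^^ n) ` A))" "diameter A \<le> d" "0 < l"
  shows "orbit_excess l d h (h ` A) = orbit_excess l d h A / l"
proof -
  have "diam_excess d A = 0" using assms(2) by (simp add: diam_excess_eq_0_iff)
  then have "(\<lambda>n. l ^ Suc n * diam_excess d ((h ^^ Suc n) ` A)) sums orbit_excess l d h A"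
    using summable_sums[OF assms(1)] by (subst sums_Suc_iff) (simp add: orbit_excess_def)
  then have "(\<lambda>n. l ^ Suc n * diam_excess d ((h ^^ Suc n) ` A) / l) sums (orbit_excess l d h A / l)"
    by (rule sums_divide)
  moreover have "l ^ Suc n * diam_excess d ((h ^^ Suc n) ` A) / l = l ^ n * diam_excess d ((h ^^ n) ` h ` A)"
    for n
  proof -
    have "(h ^^ Suc n) ` A = (h ^^ n) ` h ` A" by (simp only: funpow_Suc_right image_comp)
    then show ?thesis using \<open>0 < l\<close> by simp
  qed
  ultimately show ?thesis
    unfolding orbit_excess_def[of l d h "h ` A"] by (simp add: sums_iff)
qed

lemma orbit_excess_image_inverse:
  assumes "summable (\<lambda>n. l ^ n * diam_excess d ((h ^^ n) ` A))" "h ` k ` A = A" "diameter (k ` A) \<le> d"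
  shows "orbit_excess l d h (k ` A) = l * orbit_excess l d h A"
proof -
  have shift: "(h ^^ Suc n) ` k ` A = (h ^^ n) ` A" for n
    by (simp only: funpow_Suc_right image_comp[symmetric] assms(2))
  have "(\<lambda>n. l * (l ^ n * diam_excess d ((h ^^ n) ` A))) sums (l * orbit_excess l d h A)"
    unfolding orbit_excess_def by (rule sums_mult[OF summable_sums[OF assms(1)]])
  then have "(\<lambda>n. l ^ Suc n * diam_excess d ((h ^^ Suc n) ` k ` A)) sums (l * orbit_excess l d h A)"
    by (simp only: shift power_Suc mult.assoc)
  moreover have "diam_excess d (k ` A) = 0" using assms(3) by (simp add: diam_excess_eq_0_iff)
  ultimately have "(\<lambda>n. l ^ n * diam_excess d ((h ^^ n) ` k ` A)) sums (l * orbit_excess l d h A)"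
    by (subst (asm) sums_Suc_iff) simp
  then show ?thesis
    unfolding orbit_excess_def[of l d h "k ` A"] by (simp add: sums_iff)
qed

lemma orbit_excess_singleton: "0 \<le> d \<Longrightarrow> orbit_excess l d h {x} = 0"
  by (simp add: orbit_excess_def diam_excess_def)

lemma haus_continuous_at_orbit_excess:
  assumes "compact X" "continuous_on X h" "h ` X \<subseteq> X" "0 \<le> d" "0 \<le> l" "l < 1"
    and "A \<in> C_delta X d"
  shows "haus_continuous_at (C_delta X d) (orbit_excess l d h) A"
proof -
  let ?K = "{C. C \<subseteq> X \<and> C \<noteq> {} \<and> compact C}"
  have sub: "C_delta X d \<subseteq> ?K" by (auto simp: C_delta_def continuum_in_def)
  have nonexpansive: "\<bar>max 0 (x - d) - max 0 (y - d)\<bar> \<le> \<bar>x - y\<bar>" for x y :: real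
    by (simp add: max_def abs_if)
  have "haus_continuous_at ?K (\<lambda>C. diameter ((h ^^ n) ` C)) A" for n
    using haus_continuous_at_diameter_image[OF \<open>compact X\<close> continuous_on_funpow[OF assms(2,3)]]
      \<open>A \<in> C_delta X d\<close> sub by blast
  then have "haus_continuous_at ?K (\<lambda>C. diam_excess d ((h ^^ n) ` C)) A" for n
    unfolding diam_excess_def by (rule haus_continuous_at_comp_nonexpansive) (rule nonexpansive)
  then have cont: "haus_continuous_at (C_delta X d) (\<lambda>C. diam_excess d ((h ^^ n) ` C)) A" for n
    using sub by (rule haus_continuous_at_subset)
  have bound: "\<bar>diam_excess d ((h ^^ n) ` C)\<bar> \<le> diameter X" if "C \<in> C_delta X d" for n C
  proof -
    have "(h ^^ n) ` C \<subseteq> X"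
      using that funpow_image_subset[OF assms(3)] by (auto simp: C_delta_def continuum_in_def)
    then show ?thesis
      using diam_excess_le[OF compact_imp_bounded[OF \<open>compact X\<close>] _ \<open>0 \<le> d\<close>]
      by (simp add: abs_of_nonneg diam_excess_nonneg)
  qed
  show ?thesis
    unfolding orbit_excess_def by (rule haus_continuous_at_geometric_series[OF assms(5,6,7) bound cont])
qed

section \<open>The Lyapunov function\<close>

definition two_sided_orbit_excess ::
    "real \<Rightarrow> real \<Rightarrow> ('a::metric_space \<Rightarrow> 'a) \<Rightarrow> ('a \<Rightarrow> 'a) \<Rightarrow> 'a set \<Rightarrow> real" where
  "two_sided_orbit_excess l d f g A = orbit_excess l d f A + orbit_excess l d g A"

lemma homeomorphism_selfD:
  assumes "homeomorphism X X f g"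
  shows "continuous_on X f" "f ` X \<subseteq> X" "continuous_on X g" "g ` X \<subseteq> X"
    and "A \<subseteq> X \<Longrightarrow> g ` f ` A = A" "A \<subseteq> X \<Longrightarrow> f ` g ` A = A"
proof -
  have gf: "\<And>x. x \<in> X \<Longrightarrow> g (f x) = x" and fg: "\<And>x. x \<in> X \<Longrightarrow> f (g x) = x"
    and "f ` X = X" "g ` X = X" "continuous_on X f" "continuous_on X g"
    using assms unfolding homeomorphism_def by auto
  then show "continuous_on X f" "f ` X \<subseteq> X" "continuous_on X g" "g ` X \<subseteq> X" by simp_all
  show "g ` f ` A = A" if "A \<subseteq> X" using that gf by (force simp: image_iff)
  show "f ` g ` A = A" if "A \<subseteq> X" using that fg by (force simp: image_iff)
qed

lemma haus_continuous_at_two_sided_orbit_excess: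
  assumes "compact X" "homeomorphism X X f g" "0 \<le> d" "0 \<le> l" "l < 1" "A \<in> C_delta X d"
  shows "haus_continuous_at (C_delta X d) (two_sided_orbit_excess l d f g) A"
  unfolding two_sided_orbit_excess_def
  using homeomorphism_selfD[OF assms(2)] assms
  by (intro haus_continuous_at_add haus_continuous_at_orbit_excess) auto

lemma two_sided_orbit_excess_nonneg:
  assumes "homeomorphism X X f g" "bounded X" "A \<subseteq> X" "0 \<le> d" "0 \<le> l" "l < 1"
  shows "0 \<le> two_sided_orbit_excess l d f g A"
  unfolding two_sided_orbit_excess_def
  using homeomorphism_selfD[OF assms(1)] assms
  by (intro add_nonneg_nonneg orbit_excess_nonneg summable_orbit_excess) auto

lemma two_sided_orbit_excess_eq_0_iff:
  assumes "homeomorphism X X f g" "bounded X" "0 \<le> d" "0 < l" "l < 1"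
    and expansive: "\<And>A. continuum_in X A \<Longrightarrow> (\<forall>n::int. zpow f g n ` A \<in> C_delta X d) \<Longrightarrow> A \<in> C_delta X 0"
    and "A \<in> C_delta X d"
  shows "two_sided_orbit_excess l d f g A = 0 \<longleftrightarrow> (\<exists>x. A = {x})"
proof
  note fg = homeomorphism_selfD[OF assms(1)]
  have A: "continuum_in X A" "A \<subseteq> X" using \<open>A \<in> C_delta X d\<close> by (auto simp: C_delta_def continuum_in_def)
  have iterates: "(h ^^ n) ` A \<in> C_delta X d"
    if "continuous_on X h" "h ` X \<subseteq> X" "orbit_excess l d h A = 0" for h n
  proof -
    have "summable (\<lambda>n. l ^ n * diam_excess d ((h ^^ n) ` A))"
      using that A assms(2-5) by (intro summable_orbit_excess) auto
    then have "diameter ((h ^^ n) ` A) \<le> d"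
      using orbit_excess_eq_0_iff \<open>0 < l\<close> that(3) by blast
    moreover have "continuum_in X ((h ^^ n) ` A)"
      using continuum_in_image[OF continuous_on_funpow funpow_image_subset] that A by blast
    ultimately show ?thesis by (simp add: C_delta_def)
  qed
  have nonneg: "0 \<le> orbit_excess l d h A" if "h ` X \<subseteq> X" for h
    using that A assms(2-5) by (intro orbit_excess_nonneg summable_orbit_excess) auto
  assume "two_sided_orbit_excess l d f g A = 0"
  then have "orbit_excess l d f A = 0" "orbit_excess l d g A = 0"
    using nonneg[OF fg(2)] nonneg[OF fg(4)] unfolding two_sided_orbit_excess_def by linarith+
  then have "zpow f g n ` A \<in> C_delta X d" for n
    using iterates fg by (intro zpow_image_in_C_delta) auto
  then show "\<exists>x. A = {x}"
    using expansive[OF \<open>continuum_in X A\<close>] C_delta_0_imp_singleton by blast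
next
  assume "\<exists>x. A = {x}"
  then show "two_sided_orbit_excess l d f g A = 0"
    using \<open>0 \<le> d\<close> by (auto simp: two_sided_orbit_excess_def orbit_excess_singleton)
qed

lemma two_sided_orbit_excess_images:
  assumes "homeomorphism X X f g" "bounded X" "0 \<le> d" "0 < l" "l < 1"
    and "f ` A \<in> C_delta X d" "A \<in> C_delta X d" "g ` A \<in> C_delta X d"
  shows "two_sided_orbit_excess l d f g (f ` A) + two_sided_orbit_excess l d f g (g ` A)
       = (l + 1 / l) * two_sided_orbit_excess l d f g A"
proof -
  note fg = homeomorphism_selfD[OF assms(1)]
  have "A \<subseteq> X" using \<open>A \<in> C_delta X d\<close> by (simp add: C_delta_def continuum_in_def)
  have diam: "diameter A \<le> d" "diameter (f ` A) \<le> d" "diameter (g ` A) \<le> d"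
    using assms(6-8) by (simp_all add: C_delta_def)
  have summable: "summable (\<lambda>n. l ^ n * diam_excess d ((h ^^ n) ` A))" if "h ` X \<subseteq> X" for h
    using that \<open>A \<subseteq> X\<close> assms(2-5) by (intro summable_orbit_excess) auto
  have "orbit_excess l d f (f ` A) = orbit_excess l d f A / l"
    by (rule orbit_excess_image[OF summable[OF fg(2)] diam(1) \<open>0 < l\<close>])
  moreover have "orbit_excess l d g (g ` A) = orbit_excess l d g A / l"
    by (rule orbit_excess_image[OF summable[OF fg(4)] diam(1) \<open>0 < l\<close>])
  moreover have "orbit_excess l d g (f ` A) = l * orbit_excess l d g A"
    by (rule orbit_excess_image_inverse[OF summable[OF fg(4)] fg(5)[OF \<open>A \<subseteq> X\<close>] diam(2)])
  moreover have "orbit_excess l d f (g ` A) = l * orbit_excess l d f A"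
    by (rule orbit_excess_image_inverse[OF summable[OF fg(2)] fg(6)[OF \<open>A \<subseteq> X\<close>] diam(3)])
  ultimately show ?thesis
    unfolding two_sided_orbit_excess_def by (simp add: algebra_simps)
qed

lemma exists_weight_plus_inverse_eq_3: "\<exists>l::real. 0 < l \<and> l < 1 \<and> l + 1 / l = 3"
proof (intro exI conjI)
  have "2 < sqrt (5::real)" by (rule real_less_rsqrt) simp
  moreover have "sqrt (5::real) < 3" using real_sqrt_less_mono[of 5 9] by simp
  ultimately show "0 < (3 - sqrt 5) / (2::real)" "(3 - sqrt 5) / 2 < (1::real)" by simp_all
  have "((3 - sqrt 5) / 2) ^ 2 + 1 = 3 * ((3 - sqrt 5) / (2::real))"
    by (simp add: power2_eq_square field_simps)
  then show "(3 - sqrt 5) / 2 + 1 / ((3 - sqrt 5) / 2) = (3::real)"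
    using \<open>sqrt 5 < 3\<close> by (simp add: field_simps power2_eq_square)
qed

theorem mainTheorem18:
  fixes X :: "'a::metric_space set" and f g :: "'a \<Rightarrow> 'a"
  assumes "compact X"
    and "homeomorphism X X f g"
    and "cw_expansive X f g"
  shows "\<exists>d>0. \<exists>L :: 'a set \<Rightarrow> real.
     (\<forall>A\<in>C_delta X d. \<forall>e>0. \<exists>r>0. \<forall>B\<in>C_delta X d. hausdist A B < r \<longrightarrow> \<bar>L B - L A\<bar> < e)
   \<and> (\<forall>A\<in>C_delta X d. L A \<ge> 0 \<and> (L A = 0 \<longleftrightarrow> (\<exists>x. A = {x})))
   \<and> (\<forall>A. f ` A \<in> C_delta X d \<and> A \<in> C_delta X d \<and> g ` A \<in> C_delta X d \<longrightarrow>
          L (f ` A) - 2 * L A + L (g ` A) = L A)"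
proof -
  obtain d where "d > 0" and expansive: "\<And>A. continuum_in X A \<Longrightarrow>
      (\<forall>n::int. zpow f g n ` A \<in> C_delta X d) \<Longrightarrow> A \<in> C_delta X 0"
    using assms(3) unfolding cw_expansive_def by blast
  obtain l :: real where l: "0 < l" "l < 1" "l + 1 / l = 3"
    using exists_weight_plus_inverse_eq_3 by blast
  define L where "L = two_sided_orbit_excess l d f g"
  have "bounded X" using \<open>compact X\<close> by (rule compact_imp_bounded)
  have "haus_continuous_at (C_delta X d) L A" if "A \<in> C_delta X d" for A
    unfolding L_def using assms(1,2) \<open>d > 0\<close> l that
    by (intro haus_continuous_at_two_sided_orbit_excess) auto
  moreover have "L A \<ge> 0 \<and> (L A = 0 \<longleftrightarrow> (\<exists>x. A = {x}))" if "A \<in> C_delta X d" for A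
    unfolding L_def using that \<open>bounded X\<close> assms(2) \<open>d > 0\<close> l
      two_sided_orbit_excess_eq_0_iff[OF assms(2) \<open>bounded X\<close> _ _ _ expansive]
    by (auto intro!: two_sided_orbit_excess_nonneg simp: C_delta_def continuum_in_def)
  moreover have "L (f ` A) + L (g ` A) = 3 * L A"
    if "f ` A \<in> C_delta X d" "A \<in> C_delta X d" "g ` A \<in> C_delta X d" for A
    using two_sided_orbit_excess_images[OF assms(2) \<open>bounded X\<close> _ l(1,2) that] \<open>d > 0\<close> l(3)
    unfolding L_def by simp
  ultimately show ?thesis
    using \<open>d > 0\<close> unfolding haus_continuous_at_def
    by (intro exI[of _ d] exI[of _ L] conjI) (auto simp: algebra_simps)
qed

end
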